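(* Let $k_+,k_-$ be integers with $0\leq k_- \leq k_+ \leq 3$ and $k_++k_-\geq 1$. There is an infinite family of integers $n$ such that $\mathbb{Z}^n$ can be lattice packed by $\mathcal{B}(n,2,k_+,k_-)$ with density $\delta=\Omega(c^{-\sqrt{\ln n}})$ for some real number $c>0$.
   Context: $\mathcal{B}(n,t,k_+,k_-)=\{\mathbf{x}\in\mathbb{Z}^n : -k_-\le x_i\le k_+ \text{ for all } i,\ \mathrm{wt}(\mathbf{x})\le t\}$, where $\mathrm{wt}$ is the Hamming weight. A lattice packing of $\mathbb{Z}^n$ by $\mathcal{B}$ is a lattice $\Lambda\subseteq\mathbb{Z}^n$ (additive subgroup) such that the translates $\mathbf{v}+\mathcal{B}$, $\mathbf{v}\in\Lambda$, are pairwise disjoint; its density is $|\mathcal{B}|/\mathrm{vol}(\Lambda)$, where $\mathrm{vol}(\Lambda)=|\mathbb{Z}^n/\Lambda|$. The asymptotic notation refers to $n\to\infty$ along the family. *)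

theory Defs
  imports Complex_Main
begin

text \<open>Vectors of Z^n are represented as functions nat => int vanishing outside {0..<n}.\<close>
definition zvecs :: "nat \<Rightarrow> (nat \<Rightarrow> int) set" where
  "zvecs n = {x. \<forall>i. n \<le> i \<longrightarrow> x i = 0}"

definition vadd :: "(nat \<Rightarrow> int) \<Rightarrow> (nat \<Rightarrow> int) \<Rightarrow> (nat \<Rightarrow> int)" where
  "vadd x y = (\<lambda>i. x i + y i)"

definition vneg :: "(nat \<Rightarrow> int) \<Rightarrow> (nat \<Rightarrow> int)" where
  "vneg x = (\<lambda>i. - x i)"

definition hwt :: "nat \<Rightarrow> (nat \<Rightarrow> int) \<Rightarrow> nat" where
  "hwt n x = card {i. i < n \<and> x i \<noteq> 0}"

definition errball :: "nat \<Rightarrow> nat \<Rightarrow> int \<Rightarrow> int \<Rightarrow> (nat \<Rightarrow> int) set" where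
  "errball n t kp km = {x \<in> zvecs n. (\<forall>i<n. - km \<le> x i \<and> x i \<le> kp) \<and> hwt n x \<le> t}"

definition is_lattice :: "nat \<Rightarrow> (nat \<Rightarrow> int) set \<Rightarrow> bool" where
  "is_lattice n L \<longleftrightarrow> L \<subseteq> zvecs n \<and> (\<lambda>i. 0) \<in> L \<and>
     (\<forall>x\<in>L. \<forall>y\<in>L. vadd x y \<in> L) \<and> (\<forall>x\<in>L. vneg x \<in> L)"

text \<open>vol(L) = |Z^n / L| (number of cosets).\<close>
definition lattice_index :: "nat \<Rightarrow> (nat \<Rightarrow> int) set \<Rightarrow> nat" where
  "lattice_index n L = card (zvecs n // {(x, y). x \<in> zvecs n \<and> y \<in> zvecs n \<and> vadd x (vneg y) \<in> L})"

definition finite_index :: "nat \<Rightarrow> (nat \<Rightarrow> int) set \<Rightarrow> bool" where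
  "finite_index n L \<longleftrightarrow> finite (zvecs n // {(x, y). x \<in> zvecs n \<and> y \<in> zvecs n \<and> vadd x (vneg y) \<in> L})"

definition lattice_packing :: "nat \<Rightarrow> nat \<Rightarrow> int \<Rightarrow> int \<Rightarrow> (nat \<Rightarrow> int) set \<Rightarrow> bool" where
  "lattice_packing n t kp km L \<longleftrightarrow> is_lattice n L \<and> finite_index n L \<and>
     (\<forall>v\<in>L. \<forall>w\<in>L. v \<noteq> w \<longrightarrow>
        (vadd v) ` errball n t kp km \<inter> (vadd w) ` errball n t kp km = {})"

definition packing_density :: "nat \<Rightarrow> nat \<Rightarrow> int \<Rightarrow> int \<Rightarrow> (nat \<Rightarrow> int) set \<Rightarrow> real" where
  "packing_density n t kp km L = real (card (errball n t kp km)) / real (lattice_index n L)"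

end

theory Submission
  imports Defs "HOL-Number_Theory.Number_Theory" "HOL-Library.FuncSet" "HOL-Library.Discrete_Functions"
begin

text \<open>
  Let p be a prime with p \<equiv> 2 (mod 3) such that -1 is a square modulo p, and let a_1, ..., a_n
  be distinct numbers in [0, M), 12 M < p, none of which is a nontrivial weighted average, with
  total weight at most 6, of the others. The lattice of all x with 13 | \<Sum> x_i, p | \<Sum> x_i a_i
  and p | \<Sum> x_i a_i^2 has index at most 13 p^2. If two error vectors differ by a lattice vector
  d, then d is so small that \<Sum> d_i = \<Sum> d_i a_i = 0 hold exactly. If d has at most one positive
  or at most one negative entry, this makes some a_i a weighted average of others. Otherwise d has
  two entries of each sign, and the quadratic congruence forces a_i1 - a_i2 = \<plusminus>(a_j1 - a_j2),
  producing an average again, or 3 u^2 \<equiv> 4 w^2 (mod p), impossible as 3 is not a square modulo p.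
  So the translates of the ball are disjoint, and the density is at least (n choose 2) / (13 p^2).

  Behrend's construction, the base-B expansions of the digit vectors on one sphere, yields such
  a set with n \<ge> p / 2^O(\<surd>log p). Suitable primes exceed every bound: take a prime factor of
  a^2 + 1 \<equiv> 2 (mod 3). This gives density \<Omega>(2^(-32 \<surd>ln n)).
\<close>

lemma fermat_theorem_int:
  fixes p :: nat and a :: int
  assumes "prime p" and "\<not> int p dvd a"
  shows "[a ^ (p - 1) = 1] (mod int p)"
proof -
  have "residues (int p)"
    using prime_gt_1_nat[OF assms(1)] by (simp add: residues_def)
  moreover have "coprime a (int p)"
    using prime_imp_coprime[of "int p" a] assms by (simp add: ac_simps)
  ultimately show ?thesis
    using residues.euler_theorem[of "int p" a] totient_prime[OF assms(1)] by simp
qed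

text \<open>Cubing is injective on units modulo p because 3 does not divide p - 1 = 3 k + 1.\<close>
lemma cong_cube_imp_cong:
  fixes p :: nat and x y :: int
  assumes p: "prime p" "p mod 3 = 2" and cube: "[x ^ 3 = y ^ 3] (mod int p)"
  shows "[x = y] (mod int p)"
proof (cases "int p dvd y")
  case True
  then have "int p dvd x ^ 3"
    using cube by (simp add: cong_dvd_iff power3_eq_cube)
  then have "int p dvd x"
    using p(1) prime_dvd_power by (metis prime_nat_int_transfer)
  then show ?thesis using True by (simp add: cong_iff_dvd_diff)
next
  case False
  have pi: "prime (int p)" using p(1) by simp
  have "\<not> int p dvd x ^ 3"
    using False cube pi by (simp add: cong_dvd_iff prime_dvd_power_iff)
  then have nx: "\<not> int p dvd x" by (auto simp: power3_eq_cube)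
  define k where "k = (p - 1) div 3"
  have pk: "p - 1 = 3 * k + 1" unfolding k_def using p(2) by presburger
  have "[(y ^ 3) ^ k * x = (x ^ 3) ^ k * x] (mod int p)"
    using cong_mult[OF cong_pow[OF cong_sym[OF cube]] cong_refl] .
  also have "(x ^ 3) ^ k * x = x ^ (p - 1)" using pk by (simp add: power_mult power_add)
  also have "[x ^ (p - 1) = 1] (mod int p)" using fermat_theorem_int[OF p(1) nx] .
  also have "[1 = y ^ (p - 1)] (mod int p)" using fermat_theorem_int[OF p(1) False] by (rule cong_sym)
  also have "y ^ (p - 1) = (y ^ 3) ^ k * y" using pk by (simp add: power_mult power_add)
  finally have "[(y ^ 3) ^ k * x = (y ^ 3) ^ k * y] (mod int p)" .
  moreover have "coprime ((y ^ 3) ^ k) (int p)"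
    using prime_imp_coprime[OF pi False] by (simp add: ac_simps)
  ultimately show ?thesis using cong_mult_lcancel by blast
qed

text \<open>If t^2 = -3 u^2 with u a unit, then (t - u)/(2u) is a cube root of unity other than 1.\<close>
lemma square_plus_three_square_cong_0:
  fixes p :: nat and t u :: int
  assumes p: "prime p" "p mod 3 = 2" "p \<noteq> 2" and h: "[t ^ 2 + 3 * u ^ 2 = 0] (mod int p)"
  shows "int p dvd u"
proof (rule ccontr)
  assume nu: "\<not> int p dvd u"
  have pi: "prime (int p)" using p(1) by simp
  have p5: "p > 3" using p prime_ge_2_nat[OF p(1)] by presburger
  have small: "\<not> int p dvd 2" "\<not> int p dvd 3"
    using p5 by (auto dest!: zdvd_imp_le)
  define x where "x = t - u"
  define y where "y = 2 * u"
  have "x ^ 2 + x * y + y ^ 2 = t ^ 2 + 3 * u ^ 2"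
    unfolding x_def y_def by (simp add: algebra_simps power2_eq_square)
  with h have Q: "int p dvd x ^ 2 + x * y + y ^ 2" by (simp add: cong_0_iff)
  have "x ^ 3 - y ^ 3 = (x - y) * (x ^ 2 + x * y + y ^ 2)"
    by (simp add: algebra_simps power2_eq_square power3_eq_cube)
  then have "[x ^ 3 = y ^ 3] (mod int p)" using Q by (simp add: cong_iff_dvd_diff)
  then have "[x = y] (mod int p)" using cong_cube_imp_cong p by blast
  then have "[x ^ 2 + x * y + y ^ 2 = y ^ 2 + y * y + y ^ 2] (mod int p)"
    by (intro cong_add cong_mult cong_pow cong_refl)
  then have "int p dvd 3 * y ^ 2"
    using Q by (simp add: cong_dvd_iff power2_eq_square)
  then have "int p dvd y"
    using pi small by (simp add: prime_dvd_mult_iff prime_dvd_power_iff)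
  then show False
    using pi small nu unfolding y_def by (simp add: prime_dvd_mult_iff)
qed

lemma three_square_cong_square:
  fixes p :: nat and i u w :: int
  assumes p: "prime p" "p mod 3 = 2" "p \<noteq> 2" and i: "[i ^ 2 = -1] (mod int p)"
    and h: "[3 * u ^ 2 = w ^ 2] (mod int p)"
  shows "int p dvd u"
proof (rule square_plus_three_square_cong_0[OF p])
  have "[(w * i) ^ 2 = w ^ 2 * -1] (mod int p)"
    unfolding power_mult_distrib by (intro cong_mult cong_refl i)
  moreover have "[w ^ 2 * -1 + 3 * u ^ 2 = 0] (mod int p)"
    using h by (simp add: cong_iff_dvd_diff dvd_diff_commute)
  ultimately show "[(w * i) ^ 2 + 3 * u ^ 2 = 0] (mod int p)"
    by (meson cong_add cong_refl cong_trans)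
qed

lemma mod_3_eq_1_if_prime_factors_mod_3_eq_1:
  fixes N :: nat
  assumes "N \<noteq> 0" and "\<And>q. prime q \<Longrightarrow> q dvd N \<Longrightarrow> q mod 3 = 1"
  shows "N mod 3 = 1"
  using assms
proof (induction N rule: prime_divisors_induct)
  case (factor q x)
  then have "q mod 3 = 1" "x mod 3 = 1" by auto
  then show ?case by (simp add: mod_mult_eq[symmetric])
qed auto

text \<open>Take a prime factor not congruent to 1 modulo 3 of a^2 + 1, where a is the product of the
  numbers up to K that are prime to 3.\<close>
lemma ex_large_prime_mod_3_eq_2_with_sqrt_minus_1:
  fixes K :: nat
  shows "\<exists>p. prime p \<and> K < p \<and> p mod 3 = 2 \<and> (\<exists>i::int. [i ^ 2 = -1] (mod int p))"
proof -
  define S where "S = {j \<in> {1..K}. \<not> 3 dvd j}"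
  define a where "a = \<Prod>S"
  have "\<not> 3 dvd a"
    using prime_dvd_prod_iff[of S "3::nat" "\<lambda>j. j"] unfolding a_def S_def by auto
  then have "a mod 3 = 1 \<or> a mod 3 = 2" by presburger
  then have "a ^ 2 mod 3 = 1" using power_mod[of a 3 2] by auto
  then have N3: "(a ^ 2 + 1) mod 3 = 2" by presburger
  then obtain q where q: "prime q" "q dvd a ^ 2 + 1" "q mod 3 \<noteq> 1"
    using mod_3_eq_1_if_prime_factors_mod_3_eq_1[of "a ^ 2 + 1"] by auto
  have "\<not> 3 dvd q"
  proof
    assume "3 dvd q"
    then have "q = 3" using q(1) numeral_eq_one_iff prime_nat_iff by blast
    then show False using q(2) N3 by presburger
  qed
  then have q3: "q mod 3 = 2" using q(3) by presburger
  have "K < q"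
  proof (rule ccontr)
    assume "\<not> K < q"
    then have "q \<in> S" unfolding S_def using q(1) prime_ge_1_nat \<open>\<not> 3 dvd q\<close> by auto
    then have "q dvd a" unfolding a_def S_def by (intro dvd_prodI) auto
    then have "q dvd a ^ 2" by (simp add: power2_eq_square)
    then have "q dvd 1" using q(2) by (metis dvd_add_right_iff)
    then show False using q(1) by simp
  qed
  moreover have "int q dvd int a ^ 2 + 1"
    using q(2) by (metis of_nat_1 of_nat_add of_nat_dvd_iff of_nat_power)
  then have "[int a ^ 2 = -1] (mod int q)" by (simp add: cong_iff_dvd_diff)
  ultimately show ?thesis using q(1) q3 by blast
qed

definition average_free :: "nat \<Rightarrow> nat set \<Rightarrow> bool" where
  "average_free W X \<longleftrightarrow>
     (\<forall>(I :: nat set) w f z. finite I \<longrightarrow> f ` I \<subseteq> X \<longrightarrow> z \<in> X \<longrightarrow> sum w I \<le> W \<longrightarrow>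
        (\<Sum>i\<in>I. w i * f i) = sum w I * z \<longrightarrow> (\<forall>i\<in>I. 0 < w i \<longrightarrow> f i = z))"

lemmas average_freeD = average_free_def[THEN iffD1, rule_format]

definition from_digits :: "nat \<Rightarrow> nat \<Rightarrow> (nat \<Rightarrow> nat) \<Rightarrow> nat" where
  "from_digits B D v = (\<Sum>j<D. v j * B ^ j)"

lemma from_digits_inject:
  assumes "\<forall>j<D. c j < B" and "\<forall>j<D. c' j < B" and "from_digits B D c = from_digits B D c'"
  shows "\<forall>j<D. c j = c' j"
  using assms
proof (induction D arbitrary: c c')
  case (Suc D)
  have split: "from_digits B (Suc D) c = c 0 + B * from_digits B D (\<lambda>j. c (Suc j))" for c
    unfolding from_digits_def sum.lessThan_Suc_shift
    by (simp add: sum_distrib_left mult.left_commute)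
  let ?X = "from_digits B D (\<lambda>j. c (Suc j))" and ?X' = "from_digits B D (\<lambda>j. c' (Suc j))"
  have eq: "c 0 + B * ?X = c' 0 + B * ?X'"
    using Suc.prems(3) unfolding split .
  have "c 0 < B" "c' 0 < B" using Suc.prems(1,2) by auto
  then have "c 0 = c' 0"
    using arg_cong[OF eq, of "\<lambda>x. x mod B"] by simp
  with eq \<open>c 0 < B\<close> have "?X = ?X'" by simp
  moreover have "\<forall>j<D. c (Suc j) < B" "\<forall>j<D. c' (Suc j) < B" using Suc.prems(1,2) by auto
  ultimately have "\<forall>j<D. c (Suc j) = c' (Suc j)" by (rule Suc.IH[rotated 2])
  with \<open>c 0 = c' 0\<close> show ?case by (simp add: All_less_Suc2)
qed (simp)

lemma from_digits_less:
  assumes "\<forall>j<D. v j < B"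
  shows "from_digits B D v < B ^ D"
  using assms
proof (induction D)
  case (Suc D)
  then have IH: "from_digits B D v < B ^ D" and "Suc (v D) \<le> B" by (simp_all add: Suc_leI)
  have "from_digits B (Suc D) v = from_digits B D v + v D * B ^ D" by (simp add: from_digits_def)
  also have "\<dots> < Suc (v D) * B ^ D" using IH by simp
  also have "\<dots> \<le> B * B ^ D" using \<open>Suc (v D) \<le> B\<close> by (rule mult_le_mono1)
  finally show ?case by simp
qed (simp add: from_digits_def)

lemma inj_on_from_digits:
  assumes "d \<le> B"
  shows "inj_on (from_digits B D) (PiE {..<D} (\<lambda>_. {..<d}))"
proof (rule inj_onI)
  fix v v' assume v: "v \<in> PiE {..<D} (\<lambda>_. {..<d})" and v': "v' \<in> PiE {..<D} (\<lambda>_. {..<d})"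
    and "from_digits B D v = from_digits B D v'"
  moreover have "\<forall>j<D. v j < B" "\<forall>j<D. v' j < B"
    using v v' assms by (metis PiE_mem lessThan_iff less_le_trans)+
  ultimately have "\<forall>j<D. v j = v' j" using from_digits_inject by blast
  then show "v = v'" using v v' by (intro PiE_ext) auto
qed

lemma sum_mult_from_digits:
  "(\<Sum>i\<in>I. w i * from_digits B D (v i)) = from_digits B D (\<lambda>j. \<Sum>i\<in>I. w i * v i j)"
  unfolding from_digits_def
  by (simp add: sum_distrib_left sum_distrib_right mult.assoc) (rule sum.swap)

lemma mult_from_digits: "c * from_digits B D u = from_digits B D (\<lambda>j. c * u j)"
  unfolding from_digits_def by (simp add: sum_distrib_left mult.assoc)

text \<open>Strict convexity of the sphere: with W the total weight, the weighted sum of the squared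
  distances to u is 2 r W - 2 <\<Sum> w_i v_i, u> = 2 r W - 2 W |u|^2 = 0.\<close>
lemma sphere_barycenter_eq:
  fixes w :: "'i \<Rightarrow> 'a::linordered_idom" and v :: "'i \<Rightarrow> nat \<Rightarrow> 'a" and u :: "nat \<Rightarrow> 'a"
  assumes I: "finite I" "\<forall>i\<in>I. 0 \<le> w i"
    and sphere: "\<forall>i\<in>I. (\<Sum>j<D. v i j ^ 2) = r" "(\<Sum>j<D. u j ^ 2) = r"
    and barycenter: "\<forall>j<D. (\<Sum>i\<in>I. w i * v i j) = sum w I * u j"
  shows "\<forall>i\<in>I. 0 < w i \<longrightarrow> (\<forall>j<D. v i j = u j)"
proof -
  have dist: "(\<Sum>j<D. (v i j - u j) ^ 2) = 2 * r - 2 * (\<Sum>j<D. v i j * u j)" if "i \<in> I" for i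
    using sphere that
    by (simp add: power2_diff sum.distrib sum_subtractf sum_distrib_left mult.assoc)
  have swap: "(\<Sum>i\<in>I. \<Sum>j<D. w i * v i j * u j) = (\<Sum>j<D. (\<Sum>i\<in>I. w i * v i j) * u j)"
    unfolding sum_distrib_right by (rule sum.swap)
  have bary: "(\<Sum>j<D. (\<Sum>i\<in>I. w i * v i j) * u j) = sum w I * r"
    using barycenter sphere(2) by (simp add: sum_distrib_left[symmetric] power2_eq_square mult.assoc)
  have "(\<Sum>i\<in>I. w i * (\<Sum>j<D. (v i j - u j) ^ 2))
      = (\<Sum>i\<in>I. w i * (2 * r - 2 * (\<Sum>j<D. v i j * u j)))"
    using dist by simp
  also have "\<dots> = 2 * r * sum w I - 2 * (\<Sum>i\<in>I. \<Sum>j<D. w i * v i j * u j)"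
    by (simp add: algebra_simps sum_subtractf sum_distrib_left sum_distrib_right)
  finally have total: "(\<Sum>i\<in>I. w i * (\<Sum>j<D. (v i j - u j) ^ 2)) = 0"
    unfolding swap bary by simp
  have "\<forall>i\<in>I. 0 \<le> w i * (\<Sum>j<D. (v i j - u j) ^ 2)"
    using I(2) by (simp add: sum_nonneg)
  then have each: "\<forall>i\<in>I. w i * (\<Sum>j<D. (v i j - u j) ^ 2) = 0"
    using total by (simp add: sum_nonneg_eq_0_iff[OF I(1)])
  show ?thesis
  proof (intro ballI impI allI)
    fix i j assume i: "i \<in> I" "0 < w i" and j: "j < D"
    then have "(\<Sum>j<D. (v i j - u j) ^ 2) = 0" using each[rule_format, OF i(1)] by simp
    then have "\<forall>j\<in>{..<D}. (v i j - u j) ^ 2 = 0" by (simp add: sum_nonneg_eq_0_iff)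
    then show "v i j = u j" using j by simp
  qed
qed

definition digit_sphere :: "nat \<Rightarrow> nat \<Rightarrow> nat \<Rightarrow> (nat \<Rightarrow> nat) set" where
  "digit_sphere D d r = {v \<in> PiE {..<D} (\<lambda>_. {..<d}). (\<Sum>j<D. v j ^ 2) = r}"

text \<open>The digitwise weighted sums are at most the total weight times d - 1, so there are no carries.\<close>
lemma from_digits_weighted_average_digitwise:
  assumes v: "\<forall>i\<in>I. v i \<in> PiE {..<D} (\<lambda>_. {..<d})" and u: "u \<in> PiE {..<D} (\<lambda>_. {..<d})"
    and no_carry: "sum w I * (d - 1) < B"
    and avg: "(\<Sum>i\<in>I. w i * from_digits B D (v i)) = sum w I * from_digits B D u"
  shows "\<forall>j<D. (\<Sum>i\<in>I. w i * v i j) = sum w I * u j"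
proof (rule from_digits_inject)
  show "\<forall>j<D. (\<Sum>i\<in>I. w i * v i j) < B"
  proof (intro allI impI)
    fix j assume "j < D"
    then have "(\<Sum>i\<in>I. w i * v i j) \<le> (\<Sum>i\<in>I. w i * (d - 1))"
      using v by (intro sum_mono mult_le_mono2) (force simp: PiE_iff)
    then show "(\<Sum>i\<in>I. w i * v i j) < B" using no_carry by (simp add: sum_distrib_right)
  qed
  show "\<forall>j<D. sum w I * u j < B"
  proof (intro allI impI)
    fix j assume "j < D"
    then have "sum w I * u j \<le> sum w I * (d - 1)"
      using u by (intro mult_le_mono2) (force simp: PiE_iff)
    then show "sum w I * u j < B" using no_carry by linarith
  qed
  show "from_digits B D (\<lambda>j. \<Sum>i\<in>I. w i * v i j) = from_digits B D (\<lambda>j. sum w I * u j)"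
    using avg by (simp add: sum_mult_from_digits mult_from_digits[symmetric])
qed

lemma average_free_digit_sphere:
  assumes "W * d \<le> B" and "0 < B"
  shows "average_free W (from_digits B D ` digit_sphere D d r)"
  unfolding average_free_def
proof (intro allI impI)
  let ?S = "digit_sphere D d r"
  fix I :: "nat set" and w f z
  assume I: "finite I" "f ` I \<subseteq> from_digits B D ` ?S" and "z \<in> from_digits B D ` ?S"
    and W: "sum w I \<le> W" and avg: "(\<Sum>i\<in>I. w i * f i) = sum w I * z"
  then obtain u where u: "u \<in> ?S" "z = from_digits B D u" by blast
  have "\<forall>i\<in>I. \<exists>x. x \<in> ?S \<and> f i = from_digits B D x" using I(2) by blast
  from bchoice[OF this] obtain v where v: "\<forall>i\<in>I. v i \<in> ?S \<and> f i = from_digits B D (v i)"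
    by auto
  have vS: "\<forall>i\<in>I. v i \<in> PiE {..<D} (\<lambda>_. {..<d})" "\<forall>i\<in>I. (\<Sum>j<D. v i j ^ 2) = r"
    using v unfolding digit_sphere_def by auto
  have uS: "u \<in> PiE {..<D} (\<lambda>_. {..<d})" "(\<Sum>j<D. u j ^ 2) = r"
    using u(1) unfolding digit_sphere_def by auto
  have "sum w I * (d - 1) < B"
  proof (cases d)
    case (Suc k)
    have "sum w I * k \<le> W * k" using W by (rule mult_le_mono1)
    moreover have "W * k + W \<le> B" using assms(1) Suc by simp
    ultimately have "sum w I * k + W \<le> B" by linarith
    then show ?thesis using W assms(2) Suc by (cases "W = 0") auto
  qed (use assms(2) in simp)
  moreover have "(\<Sum>i\<in>I. w i * from_digits B D (v i)) = sum w I * from_digits B D u"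
    using avg v u(2) by simp
  ultimately have barycenter: "\<forall>j<D. (\<Sum>i\<in>I. w i * v i j) = sum w I * u j"
    by (rule from_digits_weighted_average_digitwise[OF vS(1) uS(1)])
  have "\<forall>i\<in>I. 0 < int (w i) \<longrightarrow> (\<forall>j<D. int (v i j) = int (u j))"
  proof (rule sphere_barycenter_eq[where r = "int r"])
    show "\<forall>i\<in>I. (\<Sum>j<D. int (v i j) ^ 2) = int r"
      using vS(2) by (simp flip: of_nat_power of_nat_sum)
    show "(\<Sum>j<D. int (u j) ^ 2) = int r"
      using uS(2) by (simp flip: of_nat_power of_nat_sum)
    show "\<forall>j<D. (\<Sum>i\<in>I. int (w i) * int (v i j)) = (\<Sum>i\<in>I. int (w i)) * int (u j)"
      using barycenter by (simp flip: of_nat_mult of_nat_sum)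
  qed (use I(1) in auto)
  then show "\<forall>i\<in>I. 0 < w i \<longrightarrow> f i = z"
    using v u(2) by (auto simp: from_digits_def intro!: sum.cong)
qed

lemma average_free_two_points:
  fixes a b x y z :: int
  assumes "average_free W X" "x \<in> int ` X" "y \<in> int ` X" "z \<in> int ` X"
    and "0 < a" "0 \<le> b" "a + b \<le> int W" "(a + b) * z = a * x + b * y"
  shows "x = z"
proof -
  obtain x' y' z' where xyz: "x = int x'" "y = int y'" "z = int z'" "x' \<in> X" "y' \<in> X" "z' \<in> X"
    using assms(2-4) by blast
  define w :: "nat \<Rightarrow> nat" where "w i = (if i = 0 then nat a else nat b)" for i
  define f :: "nat \<Rightarrow> nat" where "f i = (if i = 0 then x' else y')" for i
  have "int ((nat a + nat b) * z') = int (nat a * x' + nat b * y')"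
    using assms(5-8) xyz by simp
  then have "(\<Sum>i\<in>{0, 1}. w i * f i) = sum w {0, 1} * z'"
    unfolding w_def f_def by (simp only: of_nat_eq_iff) simp
  moreover have "sum w {0, 1} \<le> W" using assms(5-7) unfolding w_def by simp
  ultimately have "f 0 = z'"
    using assms(1,5) xyz by (intro average_freeD[of W X "{0, 1}" f z' w 0]) (auto simp: f_def w_def)
  then show ?thesis by (simp add: f_def xyz)
qed

text \<open>The positive coefficient c z is a weight sum of the others, so a z is their weighted average.\<close>
lemma average_free_relation_one_positive:
  fixes c :: "nat \<Rightarrow> int" and a :: "nat \<Rightarrow> nat"
  assumes X: "average_free W X" "inj_on a {..<n}" "a ` {..<n} \<subseteq> X"
    and z: "z < n" "c z \<le> int W" "\<And>i. i < n \<Longrightarrow> i \<noteq> z \<Longrightarrow> c i \<le> 0"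
    and c: "(\<Sum>i<n. c i) = 0" "(\<Sum>i<n. c i * int (a i)) = 0"
  shows "\<forall>i<n. c i = 0"
proof -
  define I where "I = {..<n} - {z}"
  define w where "w i = nat (- c i)" for i
  have w: "int (w i) = - c i" if "i \<in> I" for i
    using z(3) that unfolding I_def w_def by simp
  have split: "(\<Sum>i<n. g i) = g z + (\<Sum>i\<in>I. g i)" for g :: "nat \<Rightarrow> int"
    unfolding I_def using z(1) by (simp add: sum.remove)
  have weight: "int (sum w I) = c z"
    using c(1) split[of c] w by (simp add: sum_negf)
  have "int (\<Sum>i\<in>I. w i * a i) = c z * int (a z)"
    using c(2) split[of "\<lambda>i. c i * int (a i)"] w by (simp add: sum_negf)
  then have "int (\<Sum>i\<in>I. w i * a i) = int (sum w I * a z)"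
    using weight by simp
  then have avg: "(\<Sum>i\<in>I. w i * a i) = sum w I * a z"
    by (simp only: of_nat_eq_iff)
  have I: "finite I" "a ` I \<subseteq> X" "a z \<in> X" using X(3) z(1) unfolding I_def by auto
  have "int (sum w I) \<le> int W" using weight z(2) by simp
  then have "sum w I \<le> W" by (simp only: of_nat_le_iff)
  have "w i = 0" if "i \<in> I" for i
  proof (rule ccontr)
    assume "w i \<noteq> 0"
    then have "a i = a z"
      using average_freeD[OF X(1) I \<open>sum w I \<le> W\<close> avg that] by simp
    then show False using X(2) z(1) that unfolding I_def by (auto dest: inj_onD)
  qed
  then have "c z = 0" and "\<forall>i\<in>I. c i = 0" using weight w by auto
  then show ?thesis unfolding I_def by auto
qed

lemma average_free_single_positive:
  fixes c :: "nat \<Rightarrow> int" and a :: "nat \<Rightarrow> nat"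
  assumes X: "average_free W X" "inj_on a {..<n}" "a ` {..<n} \<subseteq> X"
    and c: "\<forall>i<n. c i \<le> int W" "(\<Sum>i<n. c i) = 0" "(\<Sum>i<n. c i * int (a i)) = 0"
    and single: "card {i. i < n \<and> 0 < c i} \<le> 1"
  shows "\<forall>i<n. c i = 0"
proof -
  have "finite {i. i < n \<and> 0 < c i}" by simp
  with single consider "{i. i < n \<and> 0 < c i} = {}" | z where "{i. i < n \<and> 0 < c i} = {z}"
    by (metis card_0_eq card_1_singletonE le_Suc_eq One_nat_def le_zero_eq)
  then show ?thesis
  proof cases
    case 1
    then have "0 \<le> - c i" if "i \<in> {..<n}" for i using that by force
    then have "(\<Sum>i<n. - c i) = 0 \<longleftrightarrow> (\<forall>i\<in>{..<n}. - c i = 0)"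
      by (rule sum_nonneg_eq_0_iff[OF finite_lessThan])
    moreover have "(\<Sum>i<n. - c i) = 0" using c(2) by (simp add: sum_negf)
    ultimately show ?thesis by simp
  next
    case (2 z)
    then have "z < n" by blast
    moreover have "c i \<le> 0" if "i < n" "i \<noteq> z" for i
      using 2 that by (metis (mono_tags) mem_Collect_eq not_le singletonD)
    ultimately show ?thesis
      using average_free_relation_one_positive[OF X _ _ _ c(2,3)] c(1) by blast
  qed
qed

lemma dvd_abs_less_imp_eq_0:
  fixes t P :: int
  assumes "P dvd t" and "\<bar>t\<bar> < P"
  shows "t = 0"
  using assms dvd_imp_le_int by force

lemma cong_square_imp_eq_or_eq_neg:
  fixes p :: nat and s t :: int
  assumes "prime p" "[s ^ 2 = t ^ 2] (mod int p)" "\<bar>s - t\<bar> < int p" "\<bar>s + t\<bar> < int p"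
  shows "s = t \<or> s = - t"
proof -
  have "int p dvd (s - t) * (s + t)"
    using assms(2) by (simp add: cong_iff_dvd_diff algebra_simps power2_eq_square)
  then have "int p dvd s - t \<or> int p dvd s + t" using assms(1) by (simp add: prime_dvd_mult_iff)
  then have "s - t = 0 \<or> s + t = 0" using dvd_abs_less_imp_eq_0 assms(3,4) by blast
  then show ?thesis by auto
qed

lemma equal_weights_four_points:
  fixes p :: nat and a b x1 x2 y1 y2 :: int
  assumes p: "prime p" "2 * int M < int p"
    and X: "average_free 6 X" "X \<subseteq> {..<M}"
    and xy: "x1 \<in> int ` X" "x2 \<in> int ` X" "y1 \<in> int ` X" "y2 \<in> int ` X"
    and distinct: "x1 \<noteq> y1" "x1 \<noteq> y2" "x2 \<noteq> y1"
    and ab: "a \<in> {1, 2, 3}" "b \<in> {1, 2, 3}"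
    and lin: "a * x1 + b * x2 = a * y1 + b * y2"
    and sq: "[(x1 - x2) ^ 2 = (y1 - y2) ^ 2] (mod int p)"
  shows False
proof -
  have range: "0 \<le> t \<and> t < int M" if "t \<in> int ` X" for t
    using that X(2) by auto
  have "\<bar>(x1 - x2) - (y1 - y2)\<bar> < int p" "\<bar>(x1 - x2) + (y1 - y2)\<bar> < int p"
    using range[OF xy(1)] range[OF xy(2)] range[OF xy(3)] range[OF xy(4)] p(2) by linarith+
  then consider "x1 - x2 = y1 - y2" | "x1 - x2 = - (y1 - y2)"
    using cong_square_imp_eq_or_eq_neg[OF p(1) sq] by blast
  then show False
  proof cases
    case 1
    then have x2: "x2 = y2 + (x1 - y1)" by simp
    have "(a + b) * (x1 - y1) = 0" using lin by (simp add: x2 algebra_simps)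
    then show False using ab distinct(1) by auto
  next
    case 2
    then have x2: "x2 = x1 + y1 - y2" by simp
    text \<open>Eliminating x2 exhibits x1 or x2 as a weighted average of y1 and y2.\<close>
    show False
    proof (cases "b \<le> a")
      case True
      have "(2 * b + (a - b)) * x1 = 2 * b * y2 + (a - b) * y1"
        using lin by (simp add: x2 algebra_simps)
      then have "y2 = x1"
        using average_free_two_points[OF X(1) xy(4) xy(3) xy(1), of "2 * b" "a - b"] True ab by auto
      then show False using distinct(2) by simp
    next
      case False
      have "(2 * a + (b - a)) * x2 = 2 * a * y1 + (b - a) * y2"
        using lin by (simp add: x2 algebra_simps)
      then have "y1 = x2"
        using average_free_two_points[OF X(1) xy(3) xy(4) xy(2), of "2 * a" "b - a"] False ab by auto
      then show False using distinct(3) by simp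
    qed
  qed
qed

lemma weight_pairs_same_sum_cases:
  fixes a b c d :: int
  assumes "a \<in> {1, 2, 3}" "b \<in> {1, 2, 3}" "c \<in> {1, 2, 3}" "d \<in> {1, 2, 3}" "a + b = c + d"
  shows "(a = c \<and> b = d) \<or> (a = d \<and> b = c) \<or> (a * b = 3 \<and> c * d = 4) \<or> (a * b = 4 \<and> c * d = 3)"
  using assms by (elim insertE emptyE; simp)

lemma cong_mult_cancel_small:
  fixes p :: nat and k u v :: int
  assumes "prime p" "[k * u = k * v] (mod int p)" "0 < k" "k < int p"
  shows "[u = v] (mod int p)"
proof -
  have "\<not> int p dvd k" using assms(3,4) by (auto dest: zdvd_imp_le)
  then have "coprime k (int p)"
    using prime_imp_coprime[of "int p" k] assms(1) by (simp add: ac_simps)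
  then show ?thesis using assms(2) cong_mult_lcancel by blast
qed

lemma cong_three_square_four_square_eq_0:
  fixes p :: nat and i u w :: int
  assumes p: "prime p" "p mod 3 = 2" "p \<noteq> 2" "[i ^ 2 = -1] (mod int p)"
    and h: "[3 * u ^ 2 = 4 * w ^ 2] (mod int p)" and "\<bar>u\<bar> < int p"
  shows "u = 0"
proof -
  have "[3 * u ^ 2 = (2 * w) ^ 2] (mod int p)" using h by (simp only: power_mult_distrib) simp
  then have "int p dvd u" by (rule three_square_cong_square[OF p])
  then show ?thesis using \<open>\<bar>u\<bar> < int p\<close> by (rule dvd_abs_less_imp_eq_0)
qed

lemma cong_weighted_variance:
  fixes a b c d x1 x2 y1 y2 m :: int
  assumes "a + b = c + d" and "a * x1 + b * x2 = c * y1 + d * y2"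
    and "[a * x1 ^ 2 + b * x2 ^ 2 = c * y1 ^ 2 + d * y2 ^ 2] (mod m)"
  shows "[a * b * (x1 - x2) ^ 2 = c * d * (y1 - y2) ^ 2] (mod m)"
proof -
  have variance: "(a + b) * (a * x ^ 2 + b * y ^ 2) - (a * x + b * y) ^ 2 = a * b * (x - y) ^ 2"
    for a b x y :: int
    by (simp add: algebra_simps power2_eq_square)
  have "[(a + b) * (a * x1 ^ 2 + b * x2 ^ 2) - (a * x1 + b * x2) ^ 2
       = (c + d) * (c * y1 ^ 2 + d * y2 ^ 2) - (c * y1 + d * y2) ^ 2] (mod m)"
    unfolding assms(1,2) by (intro cong_diff cong_mult cong_refl assms(3))
  then show ?thesis unfolding variance .
qed

text \<open>The ratio c d / (a b) lies in {1, 4/3, 3/4}; the first case is excluded by average-freeness,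
  the others because 3 is not a square modulo p.\<close>
lemma no_four_point_relation:
  fixes p :: nat and i a b c d x1 x2 y1 y2 :: int
  assumes p: "prime p" "p mod 3 = 2" "[i ^ 2 = -1] (mod int p)" "9 < p" "2 * int M < int p"
    and X: "average_free 6 X" "X \<subseteq> {..<M}"
    and xy: "x1 \<in> int ` X" "x2 \<in> int ` X" "y1 \<in> int ` X" "y2 \<in> int ` X"
    and distinct: "distinct [x1, x2, y1, y2]"
    and weights: "a \<in> {1, 2, 3}" "b \<in> {1, 2, 3}" "c \<in> {1, 2, 3}" "d \<in> {1, 2, 3}" "a + b = c + d"
    and lin: "a * x1 + b * x2 = c * y1 + d * y2"
    and quad: "[a * x1 ^ 2 + b * x2 ^ 2 = c * y1 ^ 2 + d * y2 ^ 2] (mod int p)"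
  shows False
proof -
  have range: "0 \<le> t \<and> t < int M" if "t \<in> int ` X" for t
    using that X(2) by auto
  have K: "[a * b * (x1 - x2) ^ 2 = c * d * (y1 - y2) ^ 2] (mod int p)"
    by (rule cong_weighted_variance[OF weights(5) lin quad])
  have p2: "p \<noteq> 2" using p(4) by simp
  consider "a = c" "b = d" | "a = d" "b = c" | "a * b = 3" "c * d = 4" | "a * b = 4" "c * d = 3"
    using weight_pairs_same_sum_cases[OF weights] by argo
  then show False
  proof cases
    case 1
    then have "[a * b * (x1 - x2) ^ 2 = a * b * (y1 - y2) ^ 2] (mod int p)" using K by simp
    then have "[(x1 - x2) ^ 2 = (y1 - y2) ^ 2] (mod int p)"
      by (rule cong_mult_cancel_small[OF p(1)]) (use weights(1,2) p(4) in auto)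
    moreover have "a * x1 + b * x2 = a * y1 + b * y2" using lin 1 by simp
    ultimately show False
      using equal_weights_four_points[OF p(1,5) X xy _ _ _ weights(1,2)] distinct by simp
  next
    case 2
    then have "c * d = a * b" by simp
    then have "[a * b * (x1 - x2) ^ 2 = a * b * (y2 - y1) ^ 2] (mod int p)"
      using K by (simp only: power2_commute[of y1 y2])
    then have "[(x1 - x2) ^ 2 = (y2 - y1) ^ 2] (mod int p)"
      by (rule cong_mult_cancel_small[OF p(1)]) (use weights(1,2) p(4) in auto)
    moreover have "a * x1 + b * x2 = a * y2 + b * y1" using lin 2 by simp
    ultimately show False
      using equal_weights_four_points[OF p(1,5) X xy(1,2,4,3) _ _ _ weights(1,2)] distinct by simp
  next
    case 3
    then have "[3 * (x1 - x2) ^ 2 = 4 * (y1 - y2) ^ 2] (mod int p)" using K by simp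
    moreover have "\<bar>x1 - x2\<bar> < int p" using range[OF xy(1)] range[OF xy(2)] p(5) by linarith
    ultimately have "x1 - x2 = 0" by (rule cong_three_square_four_square_eq_0[OF p(1,2) p2 p(3)])
    then show False using distinct by simp
  next
    case 4
    then have "[3 * (y1 - y2) ^ 2 = 4 * (x1 - x2) ^ 2] (mod int p)" using K by (simp add: cong_sym_eq)
    moreover have "\<bar>y1 - y2\<bar> < int p" using range[OF xy(3)] range[OF xy(4)] p(5) by linarith
    ultimately have "y1 - y2 = 0" by (rule cong_three_square_four_square_eq_0[OF p(1,2) p2 p(3)])
    then show False using distinct by simp
  qed
qed

text \<open>The moduli exceed the sums produced by a difference d of two error vectors:
  13 > 12 \<ge> |\<Sum> d_i|, and p > 12 M > |\<Sum> d_i a_i| when all a_i < M.\<close>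
definition code_lattice :: "nat \<Rightarrow> nat \<Rightarrow> (nat \<Rightarrow> nat) \<Rightarrow> (nat \<Rightarrow> int) set" where
  "code_lattice n p a = {x \<in> zvecs n. 13 dvd (\<Sum>i<n. x i) \<and> int p dvd (\<Sum>i<n. x i * int (a i))
      \<and> int p dvd (\<Sum>i<n. x i * int (a i) ^ 2)}"

definition syndrome :: "nat \<Rightarrow> nat \<Rightarrow> (nat \<Rightarrow> nat) \<Rightarrow> (nat \<Rightarrow> int) \<Rightarrow> int \<times> int \<times> int" where
  "syndrome n p a x = ((\<Sum>i<n. x i) mod 13, (\<Sum>i<n. x i * int (a i)) mod int p,
      (\<Sum>i<n. x i * int (a i) ^ 2) mod int p)"

lemma is_lattice_code_lattice: "is_lattice n (code_lattice n p a)"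
  unfolding is_lattice_def code_lattice_def zvecs_def vadd_def vneg_def
  by (auto simp: sum.distrib distrib_right sum_negf)

lemma diff_in_code_lattice_iff:
  assumes "x \<in> zvecs n" "y \<in> zvecs n"
  shows "vadd x (vneg y) \<in> code_lattice n p a \<longleftrightarrow> syndrome n p a x = syndrome n p a y"
proof -
  have "vadd x (vneg y) \<in> zvecs n" using assms by (simp add: zvecs_def vadd_def vneg_def)
  moreover have sums: "(\<Sum>i<n. vadd x (vneg y) i * g i) = (\<Sum>i<n. x i * g i) - (\<Sum>i<n. y i * g i)"
    for g by (simp add: vadd_def vneg_def algebra_simps sum_subtractf)
  ultimately show ?thesis
    using sums[of "\<lambda>_. 1"] unfolding code_lattice_def syndrome_def by (simp add: mod_eq_dvd_iff)
qed

lemma code_lattice_quotient: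
  fixes n p :: nat and a :: "nat \<Rightarrow> nat"
  defines "R \<equiv> {(x, y). x \<in> zvecs n \<and> y \<in> zvecs n \<and> vadd x (vneg y) \<in> code_lattice n p a}"
  assumes "0 < p"
  shows "finite (zvecs n // R)" and "1 \<le> card (zvecs n // R)" and "card (zvecs n // R) \<le> 13 * p ^ 2"
proof -
  define G where "G = {0..<(13::int)} \<times> {0..<int p} \<times> {0..<int p}"
  define cls where "cls s = {y \<in> zvecs n. syndrome n p a y = s}" for s
  have "R `` {x} = cls (syndrome n p a x)" if "x \<in> zvecs n" for x
    unfolding R_def cls_def using diff_in_code_lattice_iff[OF that] that by auto
  then have quotient: "zvecs n // R = cls ` syndrome n p a ` zvecs n"
    unfolding quotient_def by (auto simp: image_iff)
  have "syndrome n p a ` zvecs n \<subseteq> G" unfolding G_def syndrome_def using assms(2) by auto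
  moreover have "finite G" "card G = 13 * p ^ 2"
    unfolding G_def by (simp_all add: card_cartesian_product power2_eq_square)
  ultimately have "finite (syndrome n p a ` zvecs n)" "card (syndrome n p a ` zvecs n) \<le> 13 * p ^ 2"
    by (metis finite_subset, metis card_mono)
  then show "finite (zvecs n // R)" "card (zvecs n // R) \<le> 13 * p ^ 2"
    unfolding quotient using card_image_le[of _ cls] by (auto intro: le_trans)
  have "(\<lambda>i. 0) \<in> zvecs n" unfolding zvecs_def by simp
  then show "1 \<le> card (zvecs n // R)"
    using \<open>finite (zvecs n // R)\<close> unfolding quotient by (auto simp: Suc_le_eq card_gt_0_iff)
qed

lemma errball_abs_le:
  assumes "e \<in> errball n t kp km" "km \<le> kp" "i < n"
  shows "\<bar>e i\<bar> \<le> kp"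
  using assms unfolding errball_def by auto

lemma errball_sum_abs_le:
  assumes "e \<in> errball n t kp km" "0 \<le> km" "km \<le> kp"
  shows "(\<Sum>i<n. \<bar>e i\<bar>) \<le> int t * kp"
proof -
  define A where "A = {i. i < n \<and> e i \<noteq> 0}"
  have "card A \<le> t" using assms(1) unfolding errball_def hwt_def A_def by simp
  have "(\<Sum>i<n. \<bar>e i\<bar>) = (\<Sum>i\<in>A. \<bar>e i\<bar>)"
    by (rule sum.mono_neutral_right) (auto simp: A_def)
  also have "\<dots> \<le> (\<Sum>i\<in>A. kp)"
    using errball_abs_le[OF assms(1,3)] by (intro sum_mono) (simp add: A_def)
  also have "\<dots> = int (card A) * kp" by simp
  also have "\<dots> \<le> int t * kp" using \<open>card A \<le> t\<close> assms(2,3) by (intro mult_right_mono) auto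
  finally show ?thesis .
qed

lemma finite_errball: "finite (errball n t kp km)"
proof -
  define ext where "ext f = (\<lambda>i. if i < n then f i else 0)" for f :: "nat \<Rightarrow> int"
  have "errball n t kp km \<subseteq> ext ` PiE {..<n} (\<lambda>_. {-km..kp})"
  proof
    fix x assume x: "x \<in> errball n t kp km"
    have "restrict x {..<n} \<in> PiE {..<n} (\<lambda>_. {-km..kp})" using x unfolding errball_def by auto
    moreover have "ext (restrict x {..<n}) = x"
      using x unfolding ext_def errball_def zvecs_def by (auto simp: fun_eq_iff)
    ultimately show "x \<in> ext ` PiE {..<n} (\<lambda>_. {-km..kp})" by (metis image_eqI)
  qed
  then show ?thesis by (rule finite_subset) (simp add: finite_PiE)
qed

lemma card_errball_ge:
  assumes "1 \<le> kp" "0 \<le> km"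
  shows "n choose t \<le> card (errball n t kp km)"
proof -
  define ind where "ind S = (\<lambda>i. if i \<in> S then 1 else 0 :: int)" for S :: "nat set"
  define F where "F = {S. S \<subseteq> {..<n} \<and> card S = t}"
  have "inj_on ind F"
  proof (rule inj_onI)
    fix S S' assume "ind S = ind S'"
    then have "(i \<in> S) = (i \<in> S')" for i unfolding ind_def by (metis one_neq_zero)
    then show "S = S'" by blast
  qed
  moreover have "ind ` F \<subseteq> errball n t kp km"
  proof
    fix x assume "x \<in> ind ` F"
    then obtain S where S: "S \<subseteq> {..<n}" "card S = t" and x: "x = ind S" unfolding F_def by blast
    have "x \<in> zvecs n" "\<forall>i<n. - km \<le> x i \<and> x i \<le> kp"
      unfolding x ind_def zvecs_def using S(1) assms by auto
    moreover have "{i. i < n \<and> x i \<noteq> 0} = S" unfolding x ind_def using S(1) by auto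
    then have "hwt n x \<le> t" unfolding hwt_def using S(2) by simp
    ultimately show "x \<in> errball n t kp km" unfolding errball_def by blast
  qed
  ultimately have "card F \<le> card (errball n t kp km)"
    by (rule card_inj_on_le[OF _ _ finite_errball])
  then show ?thesis using n_subsets[of "{..<n}" t] unfolding F_def by simp
qed

text \<open>Two error vectors have at most four nonzero entries between them, so if their
  difference has two positive and two negative entries, their supports are disjoint.\<close>
lemma errball_diff_two_by_two:
  assumes e: "e \<in> errball n 2 kp km" "e' \<in> errball n 2 kp km" "km \<le> kp"
    and two: "2 \<le> card {i. i < n \<and> 0 < e i - e' i}" "2 \<le> card {i. i < n \<and> e i - e' i < 0}"
  shows "\<exists>i1 i2 j1 j2. {i. i < n \<and> 0 < e i - e' i} = {i1, i2} \<and> {i. i < n \<and> e i - e' i < 0} = {j1, j2}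
    \<and> i1 \<noteq> i2 \<and> j1 \<noteq> j2 \<and> (\<forall>i\<in>{i1, i2, j1, j2}. \<bar>e i - e' i\<bar> \<le> kp)"
proof -
  define P where "P = {i. i < n \<and> 0 < e i - e' i}"
  define N where "N = {i. i < n \<and> e i - e' i < 0}"
  define A where "A = {i. i < n \<and> e i \<noteq> 0}"
  define A' where "A' = {i. i < n \<and> e' i \<noteq> 0}"
  have "card A \<le> 2" "card A' \<le> 2" using e(1,2) unfolding errball_def hwt_def A_def A'_def by auto
  have fin: "finite P" "finite N" "finite A" "finite A'" unfolding P_def N_def A_def A'_def by auto
  have "card P + card N = card (P \<union> N)"
    by (rule card_Un_disjoint[symmetric]) (use fin in \<open>auto simp: P_def N_def\<close>)
  also have "\<dots> \<le> card (A \<union> A')"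
    by (rule card_mono) (use fin in \<open>auto simp: P_def N_def A_def A'_def\<close>)
  also have "\<dots> = card A + card A' - card (A \<inter> A')"
    using card_Un_Int[OF fin(3,4)] by simp
  finally have "card P = 2" "card N = 2" "card (A \<inter> A') = 0"
    using two \<open>card A \<le> 2\<close> \<open>card A' \<le> 2\<close> unfolding P_def N_def by linarith+
  then have "card P = 2" "card N = 2" "A \<inter> A' = {}" using fin(3) by auto
  moreover have "\<bar>e i - e' i\<bar> \<le> kp" if "i \<in> P \<union> N" for i
  proof -
    have "i < n" using that unfolding P_def N_def by auto
    then have "e i = 0 \<or> e' i = 0" using \<open>A \<inter> A' = {}\<close> unfolding A_def A'_def by auto
    then show ?thesis using errball_abs_le[OF e(1,3) \<open>i < n\<close>] errball_abs_le[OF e(2,3) \<open>i < n\<close>] by auto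
  qed
  moreover obtain i1 i2 where "P = {i1, i2}" "i1 \<noteq> i2" using \<open>card P = 2\<close> by (meson card_2_iff)
  moreover obtain j1 j2 where "N = {j1, j2}" "j1 \<noteq> j2" using \<open>card N = 2\<close> by (meson card_2_iff)
  ultimately show ?thesis unfolding P_def N_def by blast
qed

lemma sum_over_four_point_support:
  fixes d g :: "nat \<Rightarrow> 'a::comm_ring"
  assumes "distinct [i1, i2, j1, j2]" "{i1, i2, j1, j2} \<subseteq> {..<n}"
    and "\<And>i. i < n \<Longrightarrow> i \<notin> {i1, i2, j1, j2} \<Longrightarrow> d i = 0"
  shows "(\<Sum>i<n. d i * g i) = d i1 * g i1 + d i2 * g i2 + d j1 * g j1 + d j2 * g j2"
proof -
  have "(\<Sum>i<n. d i * g i) = (\<Sum>i\<in>{i1, i2, j1, j2}. d i * g i)"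
    by (rule sum.mono_neutral_right) (use assms(2,3) in auto)
  also have "\<dots> = d i1 * g i1 + d i2 * g i2 + d j1 * g j1 + d j2 * g j2"
    using assms(1) by (simp add: algebra_simps)
  finally show ?thesis .
qed

lemma no_two_by_two_relation:
  fixes p M :: nat and i0 :: int and d :: "nat \<Rightarrow> int" and a :: "nat \<Rightarrow> nat"
  assumes p: "prime p" "p mod 3 = 2" "[i0 ^ 2 = -1] (mod int p)" "9 < p" "2 * int M < int p"
    and X: "average_free 6 X" "X \<subseteq> {..<M}" "inj_on a {..<n}" "a ` {..<n} \<subseteq> X"
    and P: "{i. i < n \<and> 0 < d i} = {i1, i2}" "i1 \<noteq> i2"
    and N: "{i. i < n \<and> d i < 0} = {j1, j2}" "j1 \<noteq> j2"
    and small: "\<forall>i\<in>{i1, i2, j1, j2}. \<bar>d i\<bar> \<le> 3"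
    and sums: "(\<Sum>i<n. d i) = 0" "(\<Sum>i<n. d i * int (a i)) = 0"
      "int p dvd (\<Sum>i<n. d i * int (a i) ^ 2)"
  shows False
proof -
  have idx: "i1 < n" "i2 < n" "j1 < n" "j2 < n" "0 < d i1" "0 < d i2" "d j1 < 0" "d j2 < 0"
    using P(1) N(1) by blast+
  then have distinct_idx: "distinct [i1, i2, j1, j2]" using P(2) N(2) by auto
  have "{i1, i2, j1, j2} \<subseteq> {..<n}" using idx by auto
  moreover have "d i = 0" if "i < n" "i \<notin> {i1, i2, j1, j2}" for i
    using that P(1) N(1) by (metis (mono_tags) insert_iff mem_Collect_eq linorder_neqE_linordered_idom)
  ultimately have expand:
      "(\<Sum>i<n. d i * g i) = d i1 * g i1 + d i2 * g i2 + d j1 * g j1 + d j2 * g j2" for g :: "nat \<Rightarrow> int"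
    by (rule sum_over_four_point_support[OF distinct_idx])
  have weights: "d i1 \<in> {1, 2, 3}" "d i2 \<in> {1, 2, 3}" "- d j1 \<in> {1, 2, 3}" "- d j2 \<in> {1, 2, 3}"
    using small idx by auto
  have dist: "distinct [int (a i1), int (a i2), int (a j1), int (a j2)]"
    using distinct_idx idx(1-4) inj_on_contraD[OF X(3)] by auto
  have mem: "int (a i) \<in> int ` X" if "i < n" for i using X(4) that by auto
  have sum: "d i1 + d i2 = - d j1 + - d j2" using sums(1) expand[of "\<lambda>_. 1"] by simp
  have lin: "d i1 * int (a i1) + d i2 * int (a i2) = - d j1 * int (a j1) + - d j2 * int (a j2)"
    using sums(2) expand[of "\<lambda>i. int (a i)"] by simp
  have quad: "[d i1 * int (a i1) ^ 2 + d i2 * int (a i2) ^ 2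
      = - d j1 * int (a j1) ^ 2 + - d j2 * int (a j2) ^ 2] (mod int p)"
  proof -
    have "d i1 * int (a i1) ^ 2 + d i2 * int (a i2) ^ 2 - (- d j1 * int (a j1) ^ 2 + - d j2 * int (a j2) ^ 2)
        = (\<Sum>i<n. d i * int (a i) ^ 2)"
      using expand[of "\<lambda>i. int (a i) ^ 2"] by simp
    then show ?thesis using sums(3) by (simp only: cong_iff_dvd_diff)
  qed
  show False
    by (rule no_four_point_relation[OF p X(1,2) mem[OF idx(1)] mem[OF idx(2)] mem[OF idx(3)]
          mem[OF idx(4)] dist weights sum lin quad])
qed

lemma errball_diff_abs_le:
  assumes e: "e \<in> errball n 2 kp km" "e' \<in> errball n 2 kp km" and k: "0 \<le> km" "km \<le> kp" "kp \<le> 3"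
  shows "\<forall>i<n. \<bar>e i - e' i\<bar> \<le> 6" and "(\<Sum>i<n. \<bar>e i - e' i\<bar>) \<le> 12"
proof -
  show "\<forall>i<n. \<bar>e i - e' i\<bar> \<le> 6"
    using abs_triangle_ineq4 errball_abs_le[OF e(1) k(2)] errball_abs_le[OF e(2) k(2)] k(3)
    by (smt (verit))
  have "(\<Sum>i<n. \<bar>e i - e' i\<bar>) \<le> (\<Sum>i<n. \<bar>e i\<bar>) + (\<Sum>i<n. \<bar>e' i\<bar>)"
    unfolding sum.distrib[symmetric] by (intro sum_mono abs_triangle_ineq4)
  also have "\<dots> \<le> 12"
    using errball_sum_abs_le[OF e(1) k(1,2)] errball_sum_abs_le[OF e(2) k(1,2)] k(3) by simp
  finally show "(\<Sum>i<n. \<bar>e i - e' i\<bar>) \<le> 12" .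
qed

lemma small_relation_eq_0:
  fixes p M :: nat and i0 :: int and d :: "nat \<Rightarrow> int" and a :: "nat \<Rightarrow> nat"
  assumes p: "prime p" "p mod 3 = 2" "[i0 ^ 2 = -1] (mod int p)" "9 < p" "2 * int M < int p"
    and X: "average_free 6 X" "X \<subseteq> {..<M}" "inj_on a {..<n}" "a ` {..<n} \<subseteq> X"
    and small: "\<forall>i<n. \<bar>d i\<bar> \<le> 6"
    and sums: "(\<Sum>i<n. d i) = 0" "(\<Sum>i<n. d i * int (a i)) = 0"
      "int p dvd (\<Sum>i<n. d i * int (a i) ^ 2)"
    and two_by_two: "2 \<le> card {i. i < n \<and> 0 < d i} \<Longrightarrow> 2 \<le> card {i. i < n \<and> d i < 0} \<Longrightarrow>
      \<exists>i1 i2 j1 j2. {i. i < n \<and> 0 < d i} = {i1, i2} \<and> {i. i < n \<and> d i < 0} = {j1, j2}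
        \<and> i1 \<noteq> i2 \<and> j1 \<noteq> j2 \<and> (\<forall>i\<in>{i1, i2, j1, j2}. \<bar>d i\<bar> \<le> 3)"
  shows "\<forall>i<n. d i = 0"
proof -
  have d_le: "\<forall>i<n. d i \<le> int 6" "\<forall>i<n. - d i \<le> int 6" using small by (auto simp: abs_le_iff)
  consider "card {i. i < n \<and> 0 < d i} \<le> 1" | "card {i. i < n \<and> d i < 0} \<le> 1"
    | "2 \<le> card {i. i < n \<and> 0 < d i}" "2 \<le> card {i. i < n \<and> d i < 0}"
    by linarith
  then show ?thesis
  proof cases
    case 1
    then show ?thesis by (rule average_free_single_positive[OF X(1,3,4) d_le(1) sums(1,2)])
  next
    case 2
    then have "card {i. i < n \<and> 0 < - d i} \<le> 1" by simp
    moreover have "(\<Sum>i<n. - d i) = 0" "(\<Sum>i<n. - d i * int (a i)) = 0"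
      using sums(1,2) by (simp_all add: sum_negf)
    ultimately have "\<forall>i<n. - d i = 0"
      using average_free_single_positive[OF X(1,3,4) d_le(2)] by blast
    then show ?thesis by simp
  next
    case 3
    then obtain i1 i2 j1 j2 where P: "{i. i < n \<and> 0 < d i} = {i1, i2}" "i1 \<noteq> i2"
      and N: "{i. i < n \<and> d i < 0} = {j1, j2}" "j1 \<noteq> j2"
      and small': "\<forall>i\<in>{i1, i2, j1, j2}. \<bar>d i\<bar> \<le> 3"
      using two_by_two by blast
    have False by (rule no_two_by_two_relation[OF p X P N small' sums])
    then show ?thesis ..
  qed
qed

lemma errball_eq_if_diff_in_code_lattice:
  fixes p M :: nat and i0 kp km :: int and a :: "nat \<Rightarrow> nat"
  assumes p: "prime p" "p mod 3 = 2" "[i0 ^ 2 = -1] (mod int p)" "0 < M" "12 * M < p"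
    and X: "average_free 6 X" "X \<subseteq> {..<M}" "inj_on a {..<n}" "a ` {..<n} \<subseteq> X"
    and k: "0 \<le> km" "km \<le> kp" "kp \<le> 3"
    and e: "e \<in> errball n 2 kp km" "e' \<in> errball n 2 kp km"
    and diff: "vadd e (vneg e') \<in> code_lattice n p a"
  shows "e = e'"
proof -
  define d where "d i = e i - e' i" for i
  note small = errball_diff_abs_le[OF e k, folded d_def]
  have dvd: "13 dvd (\<Sum>i<n. d i)" "int p dvd (\<Sum>i<n. d i * int (a i))"
    and S2: "int p dvd (\<Sum>i<n. d i * int (a i) ^ 2)"
    using diff unfolding code_lattice_def vadd_def vneg_def d_def by simp_all
  have "\<bar>\<Sum>i<n. d i\<bar> < 13" using sum_abs[of d "{..<n}"] small(2) by linarith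
  then have S0: "(\<Sum>i<n. d i) = 0" by (rule dvd_abs_less_imp_eq_0[OF dvd(1)])
  have "\<bar>\<Sum>i<n. d i * int (a i)\<bar> \<le> (\<Sum>i<n. \<bar>d i\<bar> * int M)"
  proof (rule order_trans[OF sum_abs sum_mono])
    fix i assume "i \<in> {..<n}"
    then have "a i \<in> {..<M}" using X(2,4) by blast
    then show "\<bar>d i * int (a i)\<bar> \<le> \<bar>d i\<bar> * int M" by (simp add: abs_mult mult_left_mono)
  qed
  also have "\<dots> = (\<Sum>i<n. \<bar>d i\<bar>) * int M" by (simp add: sum_distrib_right)
  also have "\<dots> \<le> 12 * int M" using small(2) by (intro mult_right_mono) auto
  finally have "\<bar>\<Sum>i<n. d i * int (a i)\<bar> < int p" using p(5) by linarith
  then have S1: "(\<Sum>i<n. d i * int (a i)) = 0" by (rule dvd_abs_less_imp_eq_0[OF dvd(2)])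
  have "9 < p" "2 * int M < int p" using p(4,5) by simp_all
  then have "\<forall>i<n. d i = 0"
  proof (rule small_relation_eq_0[OF p(1-3) _ _ X small(1) S0 S1 S2])
    assume "2 \<le> card {i. i < n \<and> 0 < d i}" "2 \<le> card {i. i < n \<and> d i < 0}"
    then show "\<exists>i1 i2 j1 j2. {i. i < n \<and> 0 < d i} = {i1, i2} \<and> {i. i < n \<and> d i < 0} = {j1, j2}
        \<and> i1 \<noteq> i2 \<and> j1 \<noteq> j2 \<and> (\<forall>i\<in>{i1, i2, j1, j2}. \<bar>d i\<bar> \<le> 3)"
      using errball_diff_two_by_two[OF e k(2)] k(3) unfolding d_def by fastforce
  qed
  moreover have "e i = e' i" if "n \<le> i" for i
    using e that unfolding errball_def zvecs_def by simp
  ultimately show "e = e'" unfolding d_def by (metis eq_iff_diff_eq_0 not_le ext)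
qed

lemma lattice_packing_code_lattice:
  fixes p M :: nat and i0 kp km :: int and a :: "nat \<Rightarrow> nat"
  assumes p: "prime p" "p mod 3 = 2" "[i0 ^ 2 = -1] (mod int p)" "0 < M" "12 * M < p"
    and X: "average_free 6 X" "X \<subseteq> {..<M}" "inj_on a {..<n}" "a ` {..<n} \<subseteq> X"
    and k: "0 \<le> km" "km \<le> kp" "kp \<le> 3"
  shows "lattice_packing n 2 kp km (code_lattice n p a)"
  unfolding lattice_packing_def
proof (intro conjI ballI impI)
  show "is_lattice n (code_lattice n p a)" by (rule is_lattice_code_lattice)
  show "finite_index n (code_lattice n p a)"
    unfolding finite_index_def using code_lattice_quotient(1) p(1) prime_gt_0_nat by blast
  fix v w assume v: "v \<in> code_lattice n p a" and w: "w \<in> code_lattice n p a" and "v \<noteq> w"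
  show "vadd v ` errball n 2 kp km \<inter> vadd w ` errball n 2 kp km = {}"
  proof (rule ccontr)
    assume "vadd v ` errball n 2 kp km \<inter> vadd w ` errball n 2 kp km \<noteq> {}"
    then obtain e e' where e: "e \<in> errball n 2 kp km" "e' \<in> errball n 2 kp km"
      and eq: "vadd v e = vadd w e'" by blast
    have "e i - e' i = w i - v i" for i using fun_cong[OF eq, of i] unfolding vadd_def by simp
    then have "vadd e (vneg e') = vadd w (vneg v)" unfolding vadd_def vneg_def by simp
    also have "\<dots> \<in> code_lattice n p a"
      using is_lattice_code_lattice v w unfolding is_lattice_def by blast
    finally have "e = e'" by (rule errball_eq_if_diff_in_code_lattice[OF p X k e])
    then have "v = w" using eq unfolding vadd_def by (simp add: fun_eq_iff)
    then show False using \<open>v \<noteq> w\<close> by contradiction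
  qed
qed

lemma dense_packing_if_average_free:
  fixes p M :: nat and i0 kp km :: int
  assumes p: "prime p" "p mod 3 = 2" "[i0 ^ 2 = -1] (mod int p)" "0 < M" "12 * M < p"
    and X: "average_free 6 X" "X \<subseteq> {..<M}"
    and k: "0 \<le> km" "km \<le> kp" "kp \<le> 3" "1 \<le> kp"
  shows "\<exists>L. lattice_packing (card X) 2 kp km L \<and>
    real (card X choose 2) / (13 * real p ^ 2) \<le> packing_density (card X) 2 kp km L"
proof -
  define n where "n = card X"
  have "finite X" using X(2) finite_subset by blast
  then obtain a where "bij_betw a {..<n} X"
    unfolding n_def using ex_bij_betw_nat_finite atLeast0LessThan by metis
  then have a: "inj_on a {..<n}" "a ` {..<n} \<subseteq> X" by (auto simp: bij_betw_def)
  define L where "L = code_lattice n p a"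
  have "lattice_packing n 2 kp km L"
    unfolding L_def by (rule lattice_packing_code_lattice[OF p X a k(1-3)])
  moreover have "1 \<le> lattice_index n L" "lattice_index n L \<le> 13 * p ^ 2"
    unfolding lattice_index_def L_def using code_lattice_quotient(2,3) p(1) prime_gt_0_nat by blast+
  then have "real (lattice_index n L) \<le> real (13 * p ^ 2)" "0 < real (lattice_index n L)"
    by (simp_all only: of_nat_le_iff)
  then have "real (lattice_index n L) \<le> 13 * real p ^ 2" "0 < real (lattice_index n L)"
    by simp_all
  then have "real (n choose 2) / (13 * real p ^ 2) \<le> real (card (errball n 2 kp km)) / real (lattice_index n L)"
    using card_errball_ge[OF k(4,1), of n 2] by (intro frac_le) simp_all
  ultimately show ?thesis unfolding n_def packing_density_def by blast
qed

lemma ex_large_fiber: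
  assumes "finite V" and "\<forall>v\<in>V. f v \<le> (R :: nat)"
  shows "\<exists>r\<le>R. card V \<le> (R + 1) * card {v\<in>V. f v = r}"
proof (rule ccontr)
  assume "\<not> ?thesis"
  then have small: "(R + 1) * card {v\<in>V. f v = r} < card V" if "r \<in> {..R}" for r
    using that by auto
  have "V = (\<Union>r\<in>{..R}. {v\<in>V. f v = r})" using assms(2) by auto
  moreover have "card (\<Union>r\<in>{..R}. {v\<in>V. f v = r}) \<le> (\<Sum>r\<in>{..R}. card {v\<in>V. f v = r})"
    by (rule card_UN_le) simp
  ultimately have "(R + 1) * card V \<le> (R + 1) * (\<Sum>r\<in>{..R}. card {v\<in>V. f v = r})"
    by (intro mult_le_mono2) simp
  also have "\<dots> = (\<Sum>r\<in>{..R}. (R + 1) * card {v\<in>V. f v = r})"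
    by (rule sum_distrib_left)
  also have "\<dots> < (\<Sum>r\<in>{..R}. card V)" using small by (intro sum_strict_mono) auto
  finally show False by simp
qed

lemma ex_large_digit_sphere:
  fixes D d :: nat
  shows "\<exists>r. d ^ D \<le> (D * (d - 1) ^ 2 + 1) * card (digit_sphere D d r)"
proof -
  define V where "V = PiE {..<D} (\<lambda>_. {..<d})"
  have "(\<Sum>j<D. v j ^ 2) \<le> D * (d - 1) ^ 2" if "v \<in> V" for v
  proof -
    have "v j \<le> d - 1" if "j < D" for j
    proof -
      have "v j < d" using \<open>v \<in> V\<close> that unfolding V_def by (auto simp: PiE_iff)
      then show ?thesis by linarith
    qed
    then have "(\<Sum>j<D. v j ^ 2) \<le> (\<Sum>j<D. (d - 1) ^ 2)" by (intro sum_mono power_mono) auto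
    then show ?thesis by simp
  qed
  moreover have "finite V" unfolding V_def by (simp add: finite_PiE)
  ultimately obtain r where "card V \<le> (D * (d - 1) ^ 2 + 1) * card {v\<in>V. (\<Sum>j<D. v j ^ 2) = r}"
    using ex_large_fiber[of V "\<lambda>v. \<Sum>j<D. v j ^ 2"] by blast
  moreover have "{v\<in>V. (\<Sum>j<D. v j ^ 2) = r} = digit_sphere D d r"
    unfolding V_def digit_sphere_def ..
  moreover have "card V = d ^ D" unfolding V_def by (simp add: card_PiE)
  ultimately show ?thesis by auto
qed

text \<open>Behrend's construction: base 2^(k + 4) expansions of the points with digits below 2^k
  on the most populated sphere.\<close>
lemma ex_large_average_free_set:
  fixes D k :: nat
  shows "\<exists>X. average_free 6 X \<and> X \<subseteq> {..<2 ^ (D * (k + 4))} \<and> 2 ^ (k * D) \<le> card X * 2 ^ (D + 2 * k)"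
proof -
  define d :: nat where "d = 2 ^ k"
  define B :: nat where "B = 2 ^ (k + 4)"
  have "6 * d \<le> B" "d \<le> B" unfolding d_def B_def by (simp_all add: power_add)
  obtain r where r: "d ^ D \<le> (D * (d - 1) ^ 2 + 1) * card (digit_sphere D d r)"
    using ex_large_digit_sphere by blast
  define X where "X = from_digits B D ` digit_sphere D d r"
  have "inj_on (from_digits B D) (digit_sphere D d r)"
    using inj_on_from_digits[OF \<open>d \<le> B\<close>] unfolding digit_sphere_def by (rule inj_on_subset) blast
  then have "card X = card (digit_sphere D d r)" unfolding X_def by (rule card_image)
  have "D * (d - 1) ^ 2 + 1 \<le> 2 ^ (D + 2 * k)"
  proof -
    have "(d - 1) ^ 2 \<le> d ^ 2" by (rule power_mono) simp_all
    moreover have "1 \<le> d ^ 2" unfolding d_def by simp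
    ultimately have "D * (d - 1) ^ 2 + 1 \<le> D * d ^ 2 + d ^ 2" by (metis add_le_mono mult_le_mono2)
    also have "\<dots> = (D + 1) * d ^ 2" by simp
    also have "\<dots> \<le> 2 ^ D * d ^ 2" using Suc_leI[OF less_exp[of D]] by (intro mult_le_mono1) simp
    also have "\<dots> = 2 ^ (D + 2 * k)" unfolding d_def by (simp add: power_add power_mult[symmetric] mult.commute)
    finally show ?thesis .
  qed
  then have "2 ^ (k * D) \<le> 2 ^ (D + 2 * k) * card X"
    using r \<open>card X = _\<close> unfolding d_def by (metis mult_le_mono1 order_trans power_mult)
  moreover have "average_free 6 X"
    unfolding X_def using \<open>6 * d \<le> B\<close> by (rule average_free_digit_sphere) (simp add: B_def)
  moreover have "X \<subseteq> {..<2 ^ (D * (k + 4))}"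
  proof
    fix x assume "x \<in> X"
    then obtain v where "v \<in> PiE {..<D} (\<lambda>_. {..<d})" "x = from_digits B D v"
      unfolding X_def digit_sphere_def by blast
    moreover have "\<forall>j<D. v j < B"
      using \<open>v \<in> _\<close> \<open>d \<le> B\<close> by (metis PiE_mem lessThan_iff less_le_trans)
    ultimately have "x < B ^ D" using from_digits_less by blast
    then show "x \<in> {..<2 ^ (D * (k + 4))}" unfolding B_def by (simp add: power_mult[symmetric] mult.commute)
  qed
  ultimately show ?thesis by (auto simp: mult.commute)
qed

lemma ln_2_ge_half: "1 / 2 \<le> ln (2 :: real)"
proof -
  have "ln (exp 1) \<le> ln (4 :: real)" using exp_le by (subst ln_le_cancel_iff) auto
  also have "ln (4 :: real) = 2 * ln 2" using ln_realpow[of 2 2] by simp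
  finally show ?thesis by simp
qed

lemma ln_ge_if_two_power_le:
  assumes "2 ^ E \<le> n"
  shows "real E / 2 \<le> ln (real n)"
proof -
  have "real E / 2 = real E * (1 / 2)" by simp
  also have "\<dots> \<le> real E * ln 2" using ln_2_ge_half by (rule mult_left_mono) simp
  also have "\<dots> = ln (2 ^ E)" by (simp add: ln_realpow)
  also have "\<dots> \<le> ln (real n)"
  proof -
    have "(0 :: nat) < 2 ^ E" by simp
    then have "0 < n" using assms by linarith
    then show ?thesis using assms by (subst ln_le_cancel_iff) (auto simp flip: of_nat_le_iff)
  qed
  finally show ?thesis .
qed

lemma square_le_four_choose_two: "2 \<le> n \<Longrightarrow> n ^ 2 \<le> 4 * (n choose 2)"
proof -
  assume "2 \<le> n"
  have "even (n * (n - 1))" by (cases "even n") auto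
  then have "2 * (n choose 2) = n * (n - 1)" unfolding choose_two by simp
  moreover have "n ^ 2 \<le> 2 * (n * (n - 1))"
    using \<open>2 \<le> n\<close> by (cases n) (auto simp: power2_eq_square algebra_simps)
  ultimately show ?thesis by linarith
qed

lemma two_power_le_if_log_bound:
  fixes D L n :: nat
  assumes "33 \<le> D" "D ^ 2 \<le> L" "2 ^ L \<le> n * 2 ^ (8 * D + 7)"
  shows "2 ^ (D ^ 2 - 8 * D - 7) \<le> n"
proof -
  have "33 * D \<le> D ^ 2" using assms(1) by (simp add: power2_eq_square)
  then have "D ^ 2 - 8 * D - 7 + (8 * D + 7) = D ^ 2" using assms(1) by linarith
  then have "2 ^ (D ^ 2 - 8 * D - 7) * 2 ^ (8 * D + 7) \<le> (2 :: nat) ^ L"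
    using assms(2) by (metis power_add power_increasing one_le_numeral)
  then have "2 ^ (D ^ 2 - 8 * D - 7) * 2 ^ (8 * D + 7) \<le> n * 2 ^ (8 * D + 7)"
    using assms(3) by (rule order_trans)
  then show ?thesis by simp
qed

lemma less_if_log_bound:
  fixes D L n :: nat
  assumes "33 \<le> D" "D ^ 2 \<le> L" "2 ^ L \<le> n * 2 ^ (8 * D + 7)"
  shows "D < n"
proof -
  have "33 * D \<le> D ^ 2" using assms(1) by (simp add: power2_eq_square)
  then have "D \<le> D ^ 2 - 8 * D - 7" by linarith
  then have "(2 :: nat) ^ D \<le> 2 ^ (D ^ 2 - 8 * D - 7)" by (rule power_increasing) simp
  also have "\<dots> \<le> n" by (rule two_power_le_if_log_bound[OF assms])
  finally show ?thesis using less_exp[of D] by linarith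
qed

lemma sqrt_ln_ge_if_log_bound:
  fixes D L n :: nat
  assumes "33 \<le> D" "D ^ 2 \<le> L" "2 ^ L \<le> n * 2 ^ (8 * D + 7)"
  shows "real D / 2 \<le> sqrt (ln (real n))"
proof -
  define E where "E = D ^ 2 - 8 * D - 7"
  have "33 * D \<le> D ^ 2" using assms(1) by (simp add: power2_eq_square)
  then have "D ^ 2 \<le> 2 * E" unfolding E_def using assms(1) by linarith
  then have "(real D / 2) ^ 2 \<le> real E / 2"
    by (simp add: power_divide flip: of_nat_le_iff of_nat_power)
  also have "\<dots> \<le> ln (real n)"
    by (rule ln_ge_if_two_power_le) (use two_power_le_if_log_bound[OF assms] in \<open>simp add: E_def\<close>)
  finally have "sqrt ((real D / 2) ^ 2) \<le> sqrt (ln (real n))" by (rule real_sqrt_le_mono)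
  then show ?thesis by simp
qed

lemma square_le_choose_two_if_log_bound:
  fixes D L n p :: nat
  assumes "2 \<le> n" "2 ^ L \<le> n * 2 ^ (8 * D + 7)" "p < 2 ^ (L + 1)"
  shows "13 * p ^ 2 \<le> 52 * 2 ^ 16 * 2 ^ (16 * D) * (n choose 2)"
proof -
  have "p ^ 2 \<le> (2 ^ (L + 1)) ^ 2" using assms(3) by (intro power_mono) auto
  also have "\<dots> = 4 * (2 ^ L) ^ 2" by (simp add: power_mult_distrib)
  also have "\<dots> \<le> 4 * (n * 2 ^ (8 * D + 7)) ^ 2" using assms(2) by (intro mult_le_mono2 power_mono) auto
  also have "\<dots> = 4 * n ^ 2 * 2 ^ (16 * D + 14)" by (simp add: power_mult_distrib flip: power_mult)
  also have "\<dots> \<le> 4 * (4 * (n choose 2)) * 2 ^ (16 * D + 14)"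
    using square_le_four_choose_two[OF assms(1)] by simp
  finally show ?thesis by (simp add: power_add)
qed

lemma density_lower_bound:
  fixes n D L p :: nat
  assumes D: "33 \<le> D" "D ^ 2 \<le> L" and n: "2 ^ L \<le> n * 2 ^ (8 * D + 7)"
    and p: "0 < p" "p < 2 ^ (L + 1)"
  shows "1 / (52 * 2 ^ 16) * (2 ^ 32) powr (- sqrt (ln (real n))) \<le> real (n choose 2) / (13 * real p ^ 2)"
proof -
  have "32 * - sqrt (ln (real n)) \<le> - (16 * real D)"
    using sqrt_ln_ge_if_log_bound[OF D n] by simp
  have "(2 ^ 32 :: real) powr (- sqrt (ln (real n))) = (2 powr 32) powr (- sqrt (ln (real n)))"
    using powr_realpow[of 2 32] by simp
  also have "\<dots> = 2 powr (32 * - sqrt (ln (real n)))" by (simp only: powr_powr)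
  also have "\<dots> \<le> 2 powr (- (16 * real D))"
    using \<open>32 * - sqrt (ln (real n)) \<le> - (16 * real D)\<close> by (intro powr_mono) auto
  also have "\<dots> = 1 / 2 ^ (16 * D)"
    using powr_realpow[of 2 "16 * D"] by (simp add: powr_minus divide_inverse)
  finally have "1 / (52 * 2 ^ 16) * (2 ^ 32) powr (- sqrt (ln (real n)))
      \<le> 1 / (52 * 2 ^ 16 * 2 ^ (16 * D))" by (simp add: divide_right_mono)
  also have "\<dots> \<le> real (n choose 2) / (13 * real p ^ 2)"
  proof -
    have "2 \<le> n" using less_if_log_bound[OF D n] D(1) by linarith
    then have "real (13 * p ^ 2) \<le> real (52 * 2 ^ 16 * 2 ^ (16 * D) * (n choose 2))"
      using square_le_choose_two_if_log_bound[OF _ n p(2)] by (simp only: of_nat_le_iff)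
    then show ?thesis using p(1) by (simp add: field_simps)
  qed
  finally show ?thesis .
qed

lemma ex_digit_length:
  fixes D L :: nat
  assumes D: "33 \<le> D" "D ^ 2 \<le> L" "L < (D + 1) ^ 2"
  shows "\<exists>q. 4 \<le> q \<and> q \<le> D + 2 \<and> D * q \<le> L - 4 \<and> L - 4 < D * (q + 1)"
proof -
  define q where "q = (L - 4) div D"
  have "33 * D \<le> D ^ 2" using D(1) by (simp add: power2_eq_square)
  have q_le: "D * q \<le> L - 4" unfolding q_def by (simp add: mult.commute)
  have "L - 4 = D * q + (L - 4) mod D" unfolding q_def by simp
  moreover have "(L - 4) mod D < D" using D(1) by simp
  ultimately have q_gt: "L - 4 < D * (q + 1)" by (simp add: algebra_simps)
  have "4 * D \<le> L - 4" using D(2) \<open>33 * D \<le> D ^ 2\<close> by linarith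
  then have "(4 * D) div D \<le> (L - 4) div D" by (rule div_le_mono)
  then have "4 \<le> q" unfolding q_def using D(1) by simp
  have "D * q < (D + 1) ^ 2" using q_le D(3) by linarith
  also have "\<dots> \<le> D * (D + 3)" using D(1) by (simp add: power2_eq_square algebra_simps)
  finally have "q \<le> D + 2" by simp
  with \<open>4 \<le> q\<close> q_le q_gt show ?thesis by blast
qed

lemma ex_average_free_set_below_power_of_two:
  fixes D L :: nat
  assumes D: "33 \<le> D" "D ^ 2 \<le> L" "L < (D + 1) ^ 2"
  shows "\<exists>X. average_free 6 X \<and> X \<subseteq> {..<2 ^ (L - 4)} \<and> 2 ^ L \<le> card X * 2 ^ (8 * D + 7)"
proof -
  obtain q where q: "4 \<le> q" "q \<le> D + 2" "D * q \<le> L - 4" "L - 4 < D * (q + 1)"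
    using ex_digit_length[OF D] by blast
  define k where "k = q - 4"
  obtain X where X: "average_free 6 X" "X \<subseteq> {..<2 ^ (D * (k + 4))}"
    and size: "2 ^ (k * D) \<le> card X * 2 ^ (D + 2 * k)"
    using ex_large_average_free_set by blast
  have "X \<subseteq> {..<2 ^ (L - 4)}"
  proof -
    have "{..<(2 :: nat) ^ (D * (k + 4))} \<subseteq> {..<2 ^ (L - 4)}"
      unfolding lessThan_subset_iff using q(1,3) unfolding k_def
      by (intro power_increasing) simp_all
    then show ?thesis using X(2) by (rule order_trans[rotated])
  qed
  moreover have "2 ^ L \<le> card X * 2 ^ (8 * D + 7)"
  proof -
    have "L \<le> k * D + (5 * D + 3)"
      using q(1,4) unfolding k_def by (simp add: algebra_simps)
    then have "(2 :: nat) ^ L \<le> 2 ^ (k * D) * 2 ^ (5 * D + 3)"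
      by (simp add: power_increasing flip: power_add)
    also have "\<dots> \<le> card X * 2 ^ (D + 2 * k) * 2 ^ (5 * D + 3)" using size by simp
    also have "\<dots> \<le> card X * 2 ^ (8 * D + 7)"
      using q(2) unfolding k_def mult.assoc power_add[symmetric]
      by (intro mult_le_mono2 power_increasing) simp_all
    finally show ?thesis .
  qed
  ultimately show ?thesis using X(1) by blast
qed

lemma arbitrarily_large_dense_packings:
  fixes kp km :: int
  assumes k: "0 \<le> km" "km \<le> kp" "kp \<le> 3" "1 \<le> kp"
  shows "\<exists>n\<ge>m. \<exists>L. lattice_packing n 2 kp km L \<and>
    1 / (52 * 2 ^ 16) * (2 ^ 32) powr (- sqrt (ln (real n))) \<le> packing_density n 2 kp km L"
proof -
  obtain p i0 where p: "prime p" "2 ^ ((m + 33) ^ 2) < p" "p mod 3 = 2" "[i0 ^ 2 = -1] (mod int p)"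
    using ex_large_prime_mod_3_eq_2_with_sqrt_minus_1[of "2 ^ ((m + 33) ^ 2)"] by blast
  define L where "L = floor_log p"
  have "0 < p" using p(2) by simp
  have L: "2 ^ L \<le> p" "p < 2 ^ (L + 1)"
    unfolding L_def using floor_log_exp2_le[OF \<open>0 < p\<close>] floor_log_exp2_gt[of p] by simp_all
  then have "(2 :: nat) ^ ((m + 33) ^ 2) < 2 ^ (L + 1)" using p(2) by linarith
  then have "(m + 33) ^ 2 < L + 1" by (rule power_less_imp_less_exp[rotated]) simp
  define D where "D = floor_sqrt L"
  have "D ^ 2 \<le> L" "L < (D + 1) ^ 2"
    unfolding D_def using Suc_floor_sqrt_power2_gt[of L] by simp_all
  moreover have "m + 33 \<le> D"
    unfolding D_def using \<open>(m + 33) ^ 2 < L + 1\<close> by (intro le_floor_sqrtI) simp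
  ultimately have D: "33 \<le> D" "D ^ 2 \<le> L" "L < (D + 1) ^ 2" "m \<le> D" by simp_all
  obtain X where X: "average_free 6 X" "X \<subseteq> {..<2 ^ (L - 4)}" "2 ^ L \<le> card X * 2 ^ (8 * D + 7)"
    using ex_average_free_set_below_power_of_two[OF D(1-3)] by blast
  define n where "n = card X"
  have "33 ^ 2 \<le> D ^ 2" using D(1) by (intro power_mono) simp_all
  then have "4 \<le> L" using D(2) by simp
  define M :: nat where "M = 2 ^ (L - 4)"
  have "(2 :: nat) ^ L = 2 ^ (L - 4 + 4)" using \<open>4 \<le> L\<close> by simp
  then have "16 * M = 2 ^ L" unfolding M_def by (simp only: power_add) simp
  moreover have "0 < M" unfolding M_def by simp
  ultimately have "0 < M" "12 * M < p" using L(1) by linarith+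
  from dense_packing_if_average_free[OF p(1,3,4) this X(1) X(2)[folded M_def] k]
  obtain Lat where packing: "lattice_packing n 2 kp km Lat"
    and dens: "real (n choose 2) / (13 * real p ^ 2) \<le> packing_density n 2 kp km Lat"
    unfolding n_def by blast
  have bound: "1 / (52 * 2 ^ 16) * (2 ^ 32) powr (- sqrt (ln (real n)))
      \<le> real (n choose 2) / (13 * real p ^ 2)"
    by (rule density_lower_bound[OF D(1,2) X(3)[folded n_def] \<open>0 < p\<close> L(2)])
  have "m \<le> n" using less_if_log_bound[OF D(1,2) X(3)[folded n_def]] D(4) by linarith
  then show ?thesis using packing order_trans[OF bound dens] by blast
qed

theorem corollary9:
  fixes kp km :: int
  assumes "0 \<le> km" and "km \<le> kp" and "kp \<le> 3" and "kp + km \<ge> 1"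
  shows "\<exists>c::real. c > 0 \<and> (\<exists>N::nat set. infinite N \<and>
           (\<exists>C::real. C > 0 \<and> (\<exists>n0::nat. \<forall>n\<in>N. n \<ge> n0 \<longrightarrow>
              (\<exists>L. lattice_packing n 2 kp km L \<and>
                   packing_density n 2 kp km L \<ge> C * c powr (- sqrt (ln (real n)))))))"
proof -
  define C :: real where "C = 1 / (52 * 2 ^ 16)"
  define c :: real where "c = 2 ^ 32"
  define N where "N = {n. \<exists>L. lattice_packing n 2 kp km L \<and>
                   packing_density n 2 kp km L \<ge> C * c powr (- sqrt (ln (real n)))}"
  have "1 \<le> kp" using assms by linarith
  then have "\<forall>m. \<exists>n\<ge>m. n \<in> N"
    using arbitrarily_large_dense_packings[OF assms(1-3)] unfolding N_def C_def c_def by blast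
  then have "infinite N" by (simp add: infinite_nat_iff_unbounded_le)
  moreover have "0 < c" "0 < C" unfolding c_def C_def by simp_all
  ultimately show ?thesis unfolding N_def by blast
qed

end
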